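(* Let $G$ be a group, $k$ a commutative ring and $R=\bigoplus_{\rho\in G}R_\rho$ a $G$-graded $k$-algebra; for $t\in R$ let $t_\rho$ denote its homogeneous component of degree $\rho$. Let $\mathcal C=R\otimes_k kG$ be the $R$-coring with bimodule structure $r(s\otimes\sigma)t=\sum_{\rho\in G}rst_\rho\otimes\sigma\rho$, comultiplication $\Delta(s\otimes\sigma)=(s\otimes\sigma)\otimes_R(1\otimes\sigma)$ and counit $\varepsilon(s\otimes\sigma)=s$. Identify ${}^*\mathcal C={}_R\mathrm{Hom}(\mathcal C,R)$ with the ring $\mathrm{Map}(G,R)$ of all functions $G\to R$ with multiplication $(f\#g)(\tau)=\sum_{\rho\in G}f(\tau)_\rho\,g(\tau\rho)$, and for $\sigma\in G$ let $v_\sigma\in\mathrm{Map}(G,R)$ be given by $v_\sigma(\tau)=\delta_{\sigma,\tau}$. Then for every right $\mathrm{Map}(G,R)$-module $M$, $$\mathrm{Rat}^{\mathcal C}(M)=\bigoplus_{\sigma\in G}M\cdot v_\sigma,$$ where the sum is direct, and this is a $G$-graded right $R$-module with $(M\cdot v_\sigma)R_\rho\subseteq M\cdot v_{\sigma\rho}$ (with $R$ acting through the embedding $r\mapsto(\sigma\mapsto r)$ of $R$ into $\mathrm{Map}(G,R)$). In particular $\mathrm{Rat}^{\mathcal C}$ is exact.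
   Context: For a ring $R$ and an $R$-coring $\mathcal C$ (an $R$-bimodule with coassociative counital bimodule maps $\Delta:\mathcal C\to\mathcal C\otimes_R\mathcal C$, $\varepsilon:\mathcal C\to R$, $\Delta(c)=c_{(1)}\otimes c_{(2)}$), ${}^*\mathcal C={}_R\mathrm{Hom}(\mathcal C,R)$ is a ring with product $(f\#g)(c)=g(c_{(1)}f(c_{(2)}))$. For a right ${}^*\mathcal C$-module $M$, $\mathrm{Rat}^{\mathcal C}(M)$ is the set of $m\in M$ for which there is $\sum_i m_i\otimes c_i\in M\otimes_R\mathcal C$ with $m\cdot f=\sum_i m_if(c_i)$ for all $f\in{}^*\mathcal C$. The identification ${}^*\mathcal C\cong\mathrm{Map}(G,R)$ sends $\varphi$ to $\sigma\mapsto\varphi(1\otimes\sigma)$. *)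

theory Defs
  imports Main
begin

text \<open>The group G is a type of class group_add (written additively:
  the product sigma rho is written sigma + rho, the unit is 0; commutativity
  is NOT assumed).\<close>

definition graded_ring :: "('g::group_add \<Rightarrow> 'r::ring_1 set) \<Rightarrow> bool" where
  "graded_ring Rg \<longleftrightarrow>
     (\<forall>\<rho>. 0 \<in> Rg \<rho> \<and> (\<forall>x\<in>Rg \<rho>. \<forall>y\<in>Rg \<rho>. x - y \<in> Rg \<rho>)) \<and>
     (\<forall>\<rho> \<tau>. \<forall>x\<in>Rg \<rho>. \<forall>y\<in>Rg \<tau>. x * y \<in> Rg (\<rho> + \<tau>)) \<and>
     (\<forall>t. \<exists>!c. finite {\<rho>. c \<rho> \<noteq> 0} \<and> (\<forall>\<rho>. c \<rho> \<in> Rg \<rho>) \<and>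
                 t = (\<Sum>\<rho>\<in>{\<rho>. c \<rho> \<noteq> 0}. c \<rho>))"

definition graded_algebra :: "('k::comm_ring_1 \<Rightarrow> 'r::ring_1) \<Rightarrow> ('g::group_add \<Rightarrow> 'r set) \<Rightarrow> bool" where
  "graded_algebra alg Rg \<longleftrightarrow>
     graded_ring Rg \<and>
     alg 1 = 1 \<and> (\<forall>a b. alg (a + b) = alg a + alg b) \<and> (\<forall>a b. alg (a * b) = alg a * alg b) \<and>
     (\<forall>a r. alg a * r = r * alg a) \<and>
     (\<forall>a \<rho>. \<forall>x\<in>Rg \<rho>. alg a * x \<in> Rg \<rho>)"

definition hcomp :: "('g::group_add \<Rightarrow> 'r::ring_1 set) \<Rightarrow> 'r \<Rightarrow> 'g \<Rightarrow> 'r" where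
  "hcomp Rg t = (THE c. finite {\<rho>. c \<rho> \<noteq> 0} \<and> (\<forall>\<rho>. c \<rho> \<in> Rg \<rho>) \<and>
                 t = (\<Sum>\<rho>\<in>{\<rho>. c \<rho> \<noteq> 0}. c \<rho>))"

definition smash :: "('g::group_add \<Rightarrow> 'r::ring_1 set) \<Rightarrow> ('g \<Rightarrow> 'r) \<Rightarrow> ('g \<Rightarrow> 'r) \<Rightarrow> ('g \<Rightarrow> 'r)" where
  "smash Rg f g = (\<lambda>\<tau>. \<Sum>\<rho>\<in>{\<rho>. hcomp Rg (f \<tau>) \<rho> \<noteq> 0}. hcomp Rg (f \<tau>) \<rho> * g (\<tau> + \<rho>))"

definition vfun :: "'g \<Rightarrow> 'g \<Rightarrow> 'r::ring_1" where
  "vfun \<sigma> = (\<lambda>\<tau>. if \<tau> = \<sigma> then 1 else 0)"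

definition embR :: "'r \<Rightarrow> 'g \<Rightarrow> 'r" where
  "embR r = (\<lambda>_. r)"

definition rmod :: "('g::group_add \<Rightarrow> 'r::ring_1 set) \<Rightarrow> ('m::ab_group_add \<Rightarrow> ('g \<Rightarrow> 'r) \<Rightarrow> 'm) \<Rightarrow> bool" where
  "rmod Rg act \<longleftrightarrow>
     (\<forall>m n f. act (m + n) f = act m f + act n f) \<and>
     (\<forall>m f g. act m (\<lambda>\<tau>. f \<tau> + g \<tau>) = act m f + act m g) \<and>
     (\<forall>m f g. act m (smash Rg f g) = act (act m f) g) \<and>
     (\<forall>m. act m (\<lambda>_. 1) = m)"

definition rmod_hom :: "('m1::ab_group_add \<Rightarrow> ('g \<Rightarrow> 'r) \<Rightarrow> 'm1) \<Rightarrow> ('m2::ab_group_add \<Rightarrow> ('g \<Rightarrow> 'r) \<Rightarrow> 'm2)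
     \<Rightarrow> ('m1 \<Rightarrow> 'm2) \<Rightarrow> bool" where
  "rmod_hom act1 act2 h \<longleftrightarrow> (\<forall>x y. h (x + y) = h x + h y) \<and> (\<forall>x \<phi>. h (act1 x \<phi>) = act2 (h x) \<phi>)"

text \<open>The coring C = R (x)_k kG is, as a left R-module, free on the elements 1 (x) sigma;
  an element is written as a finitely supported c : G -> R standing for
  sum_sigma c(sigma) (x) sigma.  Under the identification *C = Map(G,R) the functional
  phi acts by  phi(sum_sigma c(sigma) (x) sigma) = sum_sigma c(sigma) phi(sigma).\<close>
definition coring_elt :: "('g \<Rightarrow> 'r::zero) \<Rightarrow> bool" where
  "coring_elt c \<longleftrightarrow> finite {\<sigma>. c \<sigma> \<noteq> 0}"

definition pair_eval :: "('g \<Rightarrow> 'r::ring_1) \<Rightarrow> ('g \<Rightarrow> 'r) \<Rightarrow> 'r" where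
  "pair_eval \<phi> c = (\<Sum>\<sigma>\<in>{\<sigma>. c \<sigma> \<noteq> 0}. c \<sigma> * \<phi> \<sigma>)"

text \<open>Rat^C(M): m such that there is sum_i m_i (x) c_i in M (x)_R C with
  m . f = sum_i m_i f(c_i) for all f in *C = Map(G,R); here m_i f(c_i) means
  m_i acted on by the image of f(c_i) in Map(G,R) under the embedding of R.\<close>
definition Rat :: "('m::ab_group_add \<Rightarrow> ('g \<Rightarrow> 'r::ring_1) \<Rightarrow> 'm) \<Rightarrow> 'm set" where
  "Rat act = {m. \<exists>ps :: ('m \<times> ('g \<Rightarrow> 'r)) list.
       (\<forall>p\<in>set ps. coring_elt (snd p)) \<and>
       (\<forall>\<phi>. act m \<phi> = (\<Sum>p\<leftarrow>ps. act (fst p) (embR (pair_eval \<phi> (snd p)))))}"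

definition Mv :: "('m \<Rightarrow> ('g \<Rightarrow> 'r::ring_1) \<Rightarrow> 'm) \<Rightarrow> 'g \<Rightarrow> 'm set" where
  "Mv act \<sigma> = range (\<lambda>m. act m (vfun \<sigma>))"

definition sum_Mv :: "('m::ab_group_add \<Rightarrow> ('g \<Rightarrow> 'r::ring_1) \<Rightarrow> 'm) \<Rightarrow> 'm set" where
  "sum_Mv act = {x. \<exists>S g. finite S \<and> (\<forall>\<sigma>\<in>S. g \<sigma> \<in> Mv act \<sigma>) \<and> x = sum g S}"

definition direct_Mv :: "('m::ab_group_add \<Rightarrow> ('g \<Rightarrow> 'r::ring_1) \<Rightarrow> 'm) \<Rightarrow> bool" where
  "direct_Mv act \<longleftrightarrow> (\<forall>S g. finite S \<longrightarrow> (\<forall>\<sigma>\<in>S. g \<sigma> \<in> Mv act \<sigma>) \<longrightarrow> sum g S = 0 \<longrightarrow>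
                          (\<forall>\<sigma>\<in>S. g \<sigma> = 0))"

end

theory Submission
  imports Defs
begin

(* The functions v_sigma (indicator of sigma) are orthogonal idempotents of Map(G,R)
   under the smash product:  v_sigma # g = g(sigma) v_sigma  (this uses that 1 is
   homogeneous of degree 0), so v_sigma # v_tau = delta_{sigma,tau} v_sigma, and
   v_sigma # r = r # v_{sigma rho} for r homogeneous of degree rho.

   Rationality of m means that m . phi only depends on phi restricted to a finite set S
   (the support of the coring elements witnessing rationality).  Taking phi = 1 - chi_S
   gives m = sum_{sigma in S} m . v_sigma, so Rat(M) is contained in the sum of the M.v_sigma;
   conversely every m . v_sigma is rational with witness (m . v_sigma) (x) (1 (x) sigma).
   Orthogonality of the v_sigma makes the sum direct and yields the grading.  Exactness
   follows because module maps commute with the projections x |-> x . v_sigma. *)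

section \<open>Homogeneous components of a graded ring\<close>

lemma graded_ring_unique_decomposition:
  assumes "graded_ring Rg"
  shows "\<exists>!c. finite {\<rho>. c \<rho> \<noteq> 0} \<and> (\<forall>\<rho>. c \<rho> \<in> Rg \<rho>) \<and> t = (\<Sum>\<rho>\<in>{\<rho>. c \<rho> \<noteq> 0}. c \<rho>)"
  using assms unfolding graded_ring_def by blast

lemma graded_ring_zero: "graded_ring Rg \<Longrightarrow> 0 \<in> Rg \<rho>"
  unfolding graded_ring_def by blast

lemma graded_ring_mult: "graded_ring Rg \<Longrightarrow> x \<in> Rg \<rho> \<Longrightarrow> y \<in> Rg \<tau> \<Longrightarrow> x * y \<in> Rg (\<rho> + \<tau>)"
  unfolding graded_ring_def by blast

lemma hcomp_props:
  assumes "graded_ring Rg"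
  shows "finite {\<rho>. hcomp Rg t \<rho> \<noteq> 0} \<and> (\<forall>\<rho>. hcomp Rg t \<rho> \<in> Rg \<rho>) \<and>
         t = (\<Sum>\<rho>\<in>{\<rho>. hcomp Rg t \<rho> \<noteq> 0}. hcomp Rg t \<rho>)"
  unfolding hcomp_def by (rule theI'[OF graded_ring_unique_decomposition[OF assms]])

lemma hcomp_eq:
  assumes gr: "graded_ring Rg" and fin: "finite S" and sub: "{\<rho>. c \<rho> \<noteq> 0} \<subseteq> S"
    and hom: "\<forall>\<rho>. c \<rho> \<in> Rg \<rho>" and t: "t = sum c S"
  shows "hcomp Rg t = c"
proof -
  have "sum c S = sum c {\<rho>. c \<rho> \<noteq> 0}" by (rule sum.mono_neutral_right[OF fin sub]) auto
  then have "finite {\<rho>. c \<rho> \<noteq> 0} \<and> (\<forall>\<rho>. c \<rho> \<in> Rg \<rho>) \<and> t = (\<Sum>\<rho>\<in>{\<rho>. c \<rho> \<noteq> 0}. c \<rho>)"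
    using finite_subset[OF sub fin] hom t by simp
  then show ?thesis
    unfolding hcomp_def by (rule the1_equality[OF graded_ring_unique_decomposition[OF gr]])
qed

lemma hcomp_homogeneous:
  assumes gr: "graded_ring Rg" and r: "r \<in> Rg \<rho>"
  shows "hcomp Rg r = (\<lambda>\<rho>'. if \<rho>' = \<rho> then r else 0)"
  by (rule hcomp_eq[OF gr, of "{\<rho>}"]) (auto simp: r graded_ring_zero[OF gr])

lemma hcomp_zero: "graded_ring Rg \<Longrightarrow> hcomp Rg 0 = (\<lambda>_. 0)"
  by (rule hcomp_eq[of _ "{}"]) (auto simp: graded_ring_zero)

text \<open>Writing a homogeneous x of degree tau as x * 1 = sum_rho x * 1_rho gives a second
  homogeneous decomposition of x, with the summand x * 1_rho in degree tau + rho;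
  by uniqueness it vanishes unless rho = 0.\<close>
lemma homogeneous_times_hcomp_one:
  assumes gr: "graded_ring Rg" and x: "x \<in> Rg \<tau>" and rho: "\<rho> \<noteq> 0"
  shows "x * hcomp Rg 1 \<rho> = 0"
proof -
  define e where "e = hcomp Rg 1"
  define S where "S = {\<rho>. e \<rho> \<noteq> 0}"
  have fS: "finite S" and e_hom: "\<forall>\<rho>. e \<rho> \<in> Rg \<rho>" and one: "1 = sum e S"
    using hcomp_props[OF gr, of 1] by (auto simp: e_def S_def)
  define c where "c = (\<lambda>\<rho>'. x * e (-\<tau> + \<rho>'))"
  have c_hom: "\<forall>\<rho>'. c \<rho>' \<in> Rg \<rho>'"
  proof
    fix \<rho>'
    have "c \<rho>' \<in> Rg (\<tau> + (-\<tau> + \<rho>'))"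
      unfolding c_def by (rule graded_ring_mult[OF gr x e_hom[rule_format]])
    then show "c \<rho>' \<in> Rg \<rho>'" by simp
  qed
  have c_supp: "{\<rho>'. c \<rho>' \<noteq> 0} \<subseteq> (+) \<tau> ` S"
  proof
    fix \<rho>' assume "\<rho>' \<in> {\<rho>'. c \<rho>' \<noteq> 0}"
    then have "-\<tau> + \<rho>' \<in> S" by (auto simp: c_def S_def)
    then show "\<rho>' \<in> (+) \<tau> ` S" by (rule image_eqI[rotated]) simp
  qed
  have "sum c ((+) \<tau> ` S) = (\<Sum>\<rho>\<in>S. x * e \<rho>)"
    by (simp add: sum.reindex inj_on_def c_def)
  also have "\<dots> = x" by (simp add: sum_distrib_left[symmetric] one[symmetric])
  finally have "hcomp Rg x = c" using hcomp_eq[OF gr _ c_supp c_hom] fS by simp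
  then have "c = (\<lambda>\<rho>'. if \<rho>' = \<tau> then x else 0)"
    unfolding hcomp_homogeneous[OF gr x] by (rule sym)
  then have "c (\<tau> + \<rho>) = (if \<tau> + \<rho> = \<tau> then x else 0)" by simp
  moreover have "\<tau> + \<rho> \<noteq> \<tau>" using rho add_left_cancel[of \<tau> \<rho> 0] by simp
  ultimately show ?thesis by (simp add: c_def e_def)
qed

text \<open>The unit of a graded ring is homogeneous of degree 0: every component 1_rho with
  rho \<noteq> 0 equals 1 * 1_rho = sum_tau 1_tau * 1_rho = 0.\<close>
lemma one_homogeneous:
  assumes gr: "graded_ring Rg"
  shows "1 \<in> Rg 0"
proof -
  define e where "e = hcomp Rg 1"
  define S where "S = {\<rho>. e \<rho> \<noteq> 0}"
  have e_hom: "\<forall>\<rho>. e \<rho> \<in> Rg \<rho>" and one: "1 = sum e S"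
    using hcomp_props[OF gr, of 1] by (auto simp: e_def S_def)
  have "e \<rho> = 0" if "\<rho> \<noteq> 0" for \<rho>
  proof -
    have "e \<rho> = sum e S * e \<rho>" by (simp add: one[symmetric])
    also have "\<dots> = (\<Sum>\<tau>\<in>S. e \<tau> * e \<rho>)" by (rule sum_distrib_right)
    also have "\<dots> = 0"
      using homogeneous_times_hcomp_one[OF gr e_hom[rule_format] that] by (simp add: e_def)
    finally show ?thesis .
  qed
  then have "S \<subseteq> {0}" by (auto simp: S_def)
  then consider "S = {}" | "S = {0}" by blast
  then show ?thesis
  proof cases
    case 1
    then show ?thesis using one graded_ring_zero[OF gr] by simp
  next
    case 2
    then have "e 0 = 1" using one by simp
    then show ?thesis using e_hom by metis
  qed
qed

section \<open>Identities in the smash product Map(G,R)\<close>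

lemma smash_vfun_left:
  fixes g :: "'g::group_add \<Rightarrow> 'r::ring_1"
  assumes gr: "graded_ring Rg"
  shows "smash Rg (vfun \<sigma>) g = (\<lambda>\<tau>. if \<tau> = \<sigma> then g \<tau> else 0)"
proof
  fix \<tau>
  have h1: "hcomp Rg 1 = (\<lambda>\<rho>. if \<rho> = 0 then 1 else 0)"
    by (rule hcomp_homogeneous[OF gr one_homogeneous[OF gr]])
  have "{\<rho>. (if \<rho> = 0 then 1 else 0 :: 'r) \<noteq> 0} = {0}" by auto
  then show "smash Rg (vfun \<sigma>) g \<tau> = (if \<tau> = \<sigma> then g \<tau> else 0)"
    by (simp add: smash_def vfun_def h1 hcomp_zero[OF gr])
qed

lemma smash_vfun_vfun:
  assumes gr: "graded_ring Rg"
  shows "smash Rg (vfun \<sigma>) (vfun \<tau>) = (if \<sigma> = \<tau> then vfun \<sigma> else (\<lambda>_. 0))"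
  unfolding smash_vfun_left[OF gr] by (auto simp: vfun_def fun_eq_iff)

text \<open>A homogeneous constant r of degree rho moves past v_mu by shifting the index:
  r # v_mu = v_{mu - rho} # r.\<close>
lemma smash_embR_vfun:
  assumes gr: "graded_ring Rg" and r: "r \<in> Rg \<rho>"
  shows "smash Rg (embR r) (vfun \<mu>) = (\<lambda>\<tau>. if \<tau> + \<rho> = \<mu> then r else 0)"
proof
  fix \<tau>
  have "{\<rho>'. (if \<rho>' = \<rho> then r else 0) \<noteq> 0} \<subseteq> {\<rho>}" by auto
  then have "(\<Sum>\<rho>'\<in>{\<rho>'. (if \<rho>' = \<rho> then r else 0) \<noteq> 0}. (if \<rho>' = \<rho> then r else 0) * vfun \<mu> (\<tau> + \<rho>'))
      = (\<Sum>\<rho>'\<in>{\<rho>}. (if \<rho>' = \<rho> then r else 0) * vfun \<mu> (\<tau> + \<rho>'))"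
    by (intro sum.mono_neutral_left) auto
  then show "smash Rg (embR r) (vfun \<mu>) \<tau> = (if \<tau> + \<rho> = \<mu> then r else 0)"
    by (simp add: smash_def embR_def hcomp_homogeneous[OF gr r] vfun_def)
qed

lemma act_add_m: "rmod Rg act \<Longrightarrow> act (m + n) f = act m f + act n f"
  unfolding rmod_def by blast

lemma act_add_f: "rmod Rg act \<Longrightarrow> act m (\<lambda>\<tau>. f \<tau> + g \<tau>) = act m f + act m g"
  unfolding rmod_def by blast

lemma act_smash: "rmod Rg act \<Longrightarrow> act m (smash Rg f g) = act (act m f) g"
  unfolding rmod_def by blast

lemma act_one: "rmod Rg act \<Longrightarrow> act m (\<lambda>_. 1) = m"
  unfolding rmod_def by blast

lemma act_zero_m: "rmod Rg act \<Longrightarrow> act 0 f = 0"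
  using act_add_m[of Rg act 0 0 f] by simp

lemma act_zero_f: "rmod Rg act \<Longrightarrow> act m (\<lambda>_. 0) = 0"
  using act_add_f[of Rg act m "\<lambda>_. 0" "\<lambda>_. 0"] by simp

lemma act_sum_m: "rmod Rg act \<Longrightarrow> act (sum g S) f = (\<Sum>x\<in>S. act (g x) f)"
  by (induction S rule: infinite_finite_induct) (simp_all add: act_zero_m act_add_m)

lemma act_sum_f: "rmod Rg act \<Longrightarrow> act m (\<lambda>\<tau>. \<Sum>x\<in>S. F x \<tau>) = (\<Sum>x\<in>S. act m (F x))"
proof (induction S rule: infinite_finite_induct)
  case (insert x S)
  then show ?case using act_add_f[OF insert.prems, of m "F x" "\<lambda>\<tau>. \<Sum>x\<in>S. F x \<tau>"] by simp
qed (simp_all add: act_zero_f)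

lemma hom_add: "rmod_hom a1 a2 f \<Longrightarrow> f (x + y) = f x + f y"
  unfolding rmod_hom_def by blast

lemma hom_act: "rmod_hom a1 a2 f \<Longrightarrow> f (a1 x \<phi>) = a2 (f x) \<phi>"
  unfolding rmod_hom_def by blast

lemma hom_sum: "rmod_hom a1 a2 (f :: 'a::ab_group_add \<Rightarrow> 'b::ab_group_add) \<Longrightarrow> f (sum g S) = (\<Sum>x\<in>S. f (g x))"
  using hom_add[of a1 a2 f 0 0]
  by (induction S rule: infinite_finite_induct) (simp_all add: hom_add)

lemma Mv_proj:
  assumes gr: "graded_ring Rg" and md: "rmod Rg act" and x: "x \<in> Mv act \<sigma>"
  shows "act x (vfun \<tau>) = (if \<sigma> = \<tau> then x else 0)"
proof -
  obtain m where xm: "x = act m (vfun \<sigma>)" using x unfolding Mv_def by blast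
  have "act x (vfun \<tau>) = act m (smash Rg (vfun \<sigma>) (vfun \<tau>))" by (simp add: xm act_smash[OF md])
  then show ?thesis by (simp add: xm smash_vfun_vfun[OF gr] act_zero_f[OF md])
qed

section \<open>The rational part\<close>

lemma Rat_zero: "rmod Rg act \<Longrightarrow> 0 \<in> Rat act"
  unfolding Rat_def by (rule CollectI, rule exI[of _ "[]"]) (simp add: act_zero_m)

lemma Rat_add:
  assumes md: "rmod Rg act" and a: "a \<in> Rat act" and b: "b \<in> Rat act"
  shows "a + b \<in> Rat act"
proof -
  obtain ps where "\<forall>p\<in>set ps. coring_elt (snd p)"
    and "\<forall>\<phi>. act a \<phi> = (\<Sum>p\<leftarrow>ps. act (fst p) (embR (pair_eval \<phi> (snd p))))"
    using a unfolding Rat_def by blast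
  moreover obtain qs where "\<forall>p\<in>set qs. coring_elt (snd p)"
    and "\<forall>\<phi>. act b \<phi> = (\<Sum>p\<leftarrow>qs. act (fst p) (embR (pair_eval \<phi> (snd p))))"
    using b unfolding Rat_def by blast
  ultimately show ?thesis
    unfolding Rat_def by (intro CollectI exI[of _ "ps @ qs"]) (auto simp: act_add_m[OF md])
qed

lemma Rat_sum: "rmod Rg act \<Longrightarrow> (\<forall>\<sigma>\<in>S. g \<sigma> \<in> Rat act) \<Longrightarrow> sum g S \<in> Rat act"
  by (induction S rule: infinite_finite_induct) (simp_all add: Rat_zero Rat_add)

text \<open>Every element of M.v_sigma is rational, witnessed by x (x) (1 (x) sigma):
  x . phi = x . (v_sigma # phi) = x . phi(sigma).\<close>
lemma Mv_Rat:
  fixes act :: "'m::ab_group_add \<Rightarrow> ('g::group_add \<Rightarrow> 'r::ring_1) \<Rightarrow> 'm"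
  assumes gr: "graded_ring Rg" and md: "rmod Rg act" and x: "x \<in> Mv act \<sigma>"
  shows "x \<in> Rat act"
proof -
  obtain m where xm: "x = act m (vfun \<sigma>)" using x unfolding Mv_def by blast
  have v_supp: "{\<tau>. vfun \<sigma> \<tau> \<noteq> (0::'r)} = {\<sigma>}" by (auto simp: vfun_def)
  have "act x \<phi> = act x (embR (pair_eval \<phi> (vfun \<sigma>)))" for \<phi>
  proof -
    have "smash Rg (vfun \<sigma>) \<phi> = smash Rg (vfun \<sigma>) (embR (\<phi> \<sigma>))"
      by (auto simp: smash_vfun_left[OF gr] embR_def fun_eq_iff)
    then show ?thesis
      by (simp add: xm act_smash[OF md, symmetric] pair_eval_def v_supp vfun_def)
  qed
  then show ?thesis
    unfolding Rat_def coring_elt_def by (intro CollectI exI[of _ "[(x, vfun \<sigma>)]"]) (simp add: v_supp)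
qed

text \<open>If m is rational with witnesses supported in the finite set S, then m . phi = 0
  whenever phi vanishes on S; applied to 1 - chi_S this gives m = sum_{sigma in S} m . v_sigma.\<close>
lemma Rat_decomp:
  fixes act :: "'m::ab_group_add \<Rightarrow> ('g::group_add \<Rightarrow> 'r::ring_1) \<Rightarrow> 'm"
  assumes md: "rmod Rg act" and m: "m \<in> Rat act"
  shows "\<exists>S. finite S \<and> m = (\<Sum>\<sigma>\<in>S. act m (vfun \<sigma>))"
proof -
  obtain ps where cor: "\<forall>p\<in>set ps. coring_elt (snd p)"
    and eq: "\<forall>\<phi>. act m \<phi> = (\<Sum>p\<leftarrow>ps. act (fst p) (embR (pair_eval \<phi> (snd p))))"
    using m unfolding Rat_def by blast
  define S where "S = (\<Union>p\<in>set ps. {\<sigma>. snd p \<sigma> \<noteq> 0})"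
  have fS: "finite S" using cor by (auto simp: S_def coring_elt_def)
  define \<chi> :: "'g \<Rightarrow> 'r" where "\<chi> = (\<lambda>\<tau>. \<Sum>\<sigma>\<in>S. vfun \<sigma> \<tau>)"
  have chi_S: "\<chi> \<sigma> = 1" if "\<sigma> \<in> S" for \<sigma>
    using that fS by (simp add: \<chi>_def vfun_def)
  have pair_eval_vanishes: "pair_eval (\<lambda>\<tau>. 1 - \<chi> \<tau>) (snd p) = 0" if "p \<in> set ps" for p
  proof -
    have "{\<sigma>. snd p \<sigma> \<noteq> 0} \<subseteq> S" using that by (auto simp: S_def)
    then show ?thesis by (auto simp: pair_eval_def chi_S intro!: sum.neutral)
  qed
  have "act m (\<lambda>\<tau>. 1 - \<chi> \<tau>) = (\<Sum>p\<leftarrow>ps. 0)"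
    unfolding eq[rule_format]
    by (rule arg_cong[where f=sum_list], rule map_cong)
       (simp_all add: pair_eval_vanishes embR_def act_zero_f[OF md])
  then have "act m (\<lambda>\<tau>. 1 - \<chi> \<tau>) = 0" by simp
  then have "m = act m \<chi>"
    using act_one[OF md, of m] act_add_f[OF md, of m "\<lambda>\<tau>. 1 - \<chi> \<tau>" \<chi>] by simp
  also have "\<dots> = (\<Sum>\<sigma>\<in>S. act m (vfun \<sigma>))" unfolding \<chi>_def by (rule act_sum_f[OF md])
  finally show ?thesis using fS by blast
qed

lemma Rat_eq_sum_Mv:
  assumes gr: "graded_ring Rg" and md: "rmod Rg act"
  shows "Rat act = sum_Mv act"
proof
  show "Rat act \<subseteq> sum_Mv act"
  proof
    fix m assume "m \<in> Rat act"
    then obtain S where "finite S" and "m = (\<Sum>\<sigma>\<in>S. act m (vfun \<sigma>))"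
      using Rat_decomp[OF md] by blast
    then show "m \<in> sum_Mv act"
      unfolding sum_Mv_def Mv_def by (intro CollectI exI conjI) (auto intro: rangeI)
  qed
  show "sum_Mv act \<subseteq> Rat act"
  proof
    fix x assume "x \<in> sum_Mv act"
    then obtain S g where g_Mv: "\<forall>\<sigma>\<in>S. g \<sigma> \<in> Mv act \<sigma>" and x: "x = sum g S"
      unfolding sum_Mv_def by blast
    have "\<forall>\<sigma>\<in>S. g \<sigma> \<in> Rat act" using g_Mv Mv_Rat[OF gr md] by blast
    then show "x \<in> Rat act" unfolding x by (rule Rat_sum[OF md])
  qed
qed

text \<open>Second part: the sum is direct, since projecting a vanishing sum with v_tau
  isolates its tau-summand.\<close>
lemma direct_sum_Mv:
  assumes gr: "graded_ring Rg" and md: "rmod Rg act"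
  shows "direct_Mv act"
  unfolding direct_Mv_def
proof (intro allI impI ballI)
  fix S g \<tau>
  assume fS: "finite S" and gS: "\<forall>\<sigma>\<in>S. g \<sigma> \<in> Mv act \<sigma>" and "sum g S = 0" and tS: "\<tau> \<in> S"
  then have "0 = (\<Sum>\<sigma>\<in>S. act (g \<sigma>) (vfun \<tau>))" by (simp add: act_sum_m[OF md, symmetric] act_zero_m[OF md])
  also have "\<dots> = (\<Sum>\<sigma>\<in>S. if \<sigma> = \<tau> then g \<sigma> else 0)"
    using gS by (intro sum.cong) (simp_all add: Mv_proj[OF gr md])
  also have "\<dots> = g \<tau>" using fS tS by simp
  finally show "g \<tau> = 0" by simp
qed

text \<open>Third part: the grading, (M.v_sigma) R_rho \<subseteq> M.v_{sigma rho}, from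
  v_sigma # r = r # v_{sigma rho} for r of degree rho.\<close>
lemma Mv_graded:
  assumes gr: "graded_ring Rg" and md: "rmod Rg act"
    and x: "x \<in> Mv act \<sigma>" and r: "r \<in> Rg \<rho>"
  shows "act x (embR r) \<in> Mv act (\<sigma> + \<rho>)"
proof -
  obtain m where xm: "x = act m (vfun \<sigma>)" using x unfolding Mv_def by blast
  have "smash Rg (vfun \<sigma>) (embR r) = smash Rg (embR r) (vfun (\<sigma> + \<rho>))"
    unfolding smash_vfun_left[OF gr] smash_embR_vfun[OF gr r] by (auto simp: embR_def fun_eq_iff)
  then have "act x (embR r) = act (act m (embR r)) (vfun (\<sigma> + \<rho>))"
    by (simp add: xm act_smash[OF md, symmetric])
  then show ?thesis unfolding Mv_def by (rule range_eqI)
qed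

section \<open>Exactness of Rat\<close>

text \<open>Module maps preserve rationality, since they commute with the projections.\<close>
lemma hom_Rat:
  assumes gr: "graded_ring Rg" and m1: "rmod Rg act1" and m2: "rmod Rg act2"
    and hf: "rmod_hom act1 act2 f" and x: "x \<in> Rat act1"
  shows "f x \<in> Rat act2"
proof -
  obtain S where "x = (\<Sum>\<sigma>\<in>S. act1 x (vfun \<sigma>))"
    using Rat_decomp[OF m1 x] by blast
  then have "f x = f (\<Sum>\<sigma>\<in>S. act1 x (vfun \<sigma>))" by simp
  also have "\<dots> = (\<Sum>\<sigma>\<in>S. act2 (f x) (vfun \<sigma>))" by (simp add: hom_sum[OF hf] hom_act[OF hf])
  finally have "f x = (\<Sum>\<sigma>\<in>S. act2 (f x) (vfun \<sigma>))" .
  moreover have "\<forall>\<sigma>\<in>S. act2 (f x) (vfun \<sigma>) \<in> Rat act2"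
    using Mv_Rat[OF gr m2] unfolding Mv_def by blast
  ultimately show ?thesis using Rat_sum[OF m2] by metis
qed

text \<open>Lifting criterion: a rational y whose projections y . v_sigma agree with those of
  images f(x_sigma) comes from the rational element sum_sigma x_sigma . v_sigma.\<close>
lemma Rat_lift:
  assumes gr: "graded_ring Rg" and m1: "rmod Rg act1" and m2: "rmod Rg act2"
    and hf: "rmod_hom act1 act2 f" and y: "y \<in> Rat act2"
    and lift: "\<And>\<sigma>. \<exists>x. act2 y (vfun \<sigma>) = act2 (f x) (vfun \<sigma>)"
  shows "y \<in> f ` Rat act1"
proof -
  obtain S where y_decomp: "y = (\<Sum>\<sigma>\<in>S. act2 y (vfun \<sigma>))"
    using Rat_decomp[OF m2 y] by blast
  obtain xs where xs: "\<And>\<sigma>. act2 y (vfun \<sigma>) = act2 (f (xs \<sigma>)) (vfun \<sigma>)"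
    using lift by metis
  define x where "x = (\<Sum>\<sigma>\<in>S. act1 (xs \<sigma>) (vfun \<sigma>))"
  have "x \<in> Rat act1"
    unfolding x_def by (intro Rat_sum[OF m1] ballI Mv_Rat[OF gr m1]) (unfold Mv_def, rule rangeI)
  moreover have "f x = y"
    by (subst y_decomp) (simp add: x_def hom_sum[OF hf] hom_act[OF hf] xs)
  ultimately show ?thesis by blast
qed

lemma Rat_exact:
  assumes gr: "graded_ring Rg"
    and m1: "rmod Rg act1" and m2: "rmod Rg act2" and m3: "rmod Rg act3"
    and hf: "rmod_hom act1 act2 f" and hh: "rmod_hom act2 act3 h"
    and inj: "inj f" and ker: "range f = {y. h y = 0}" and surj: "surj h"
  shows "f ` Rat act1 \<subseteq> Rat act2 \<and> h ` Rat act2 \<subseteq> Rat act3 \<and> inj_on f (Rat act1) \<and>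
         f ` Rat act1 = Rat act2 \<inter> {y. h y = 0} \<and> h ` Rat act2 = Rat act3"
proof -
  have f_Rat: "f ` Rat act1 \<subseteq> Rat act2" and h_Rat: "h ` Rat act2 \<subseteq> Rat act3"
    using hom_Rat[OF gr m1 m2 hf] hom_Rat[OF gr m2 m3 hh] by blast+
  have "Rat act2 \<inter> {y. h y = 0} \<subseteq> f ` Rat act1"
  proof
    fix y assume y: "y \<in> Rat act2 \<inter> {y. h y = 0}"
    have proj_in_image: "act2 y (vfun \<sigma>) \<in> range f" for \<sigma>
      using y ker by (simp add: hom_act[OF hh] act_zero_m[OF m3])
    have "act2 (act2 y (vfun \<sigma>)) (vfun \<sigma>) = act2 y (vfun \<sigma>)" for \<sigma>
      using Mv_proj[OF gr m2, of "act2 y (vfun \<sigma>)" \<sigma> \<sigma>] by (simp add: Mv_def)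
    then have "\<exists>x. act2 y (vfun \<sigma>) = act2 (f x) (vfun \<sigma>)" for \<sigma>
      using proj_in_image[of \<sigma>] by (metis rangeE)
    then show "y \<in> f ` Rat act1" using Rat_lift[OF gr m1 m2 hf] y by blast
  qed
  moreover have "Rat act3 \<subseteq> h ` Rat act2"
  proof
    fix z assume z: "z \<in> Rat act3"
    obtain y where "z = h y" using surj by (metis surjD)
    then show "z \<in> h ` Rat act2" by (intro Rat_lift[OF gr m2 m3 hh z] exI[of _ y]) simp
  qed
  moreover have "f ` Rat act1 \<subseteq> Rat act2 \<inter> {y. h y = 0}" using f_Rat ker by blast
  moreover have "inj_on f (Rat act1)" using inj by (rule inj_on_subset) simp
  ultimately show ?thesis using f_Rat h_Rat by blast
qed

theorem mainTheorem10:
  fixes alg :: "'k::comm_ring_1 \<Rightarrow> 'r::ring_1"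
    and Rg :: "'g::group_add \<Rightarrow> 'r set"
    and act :: "'m::ab_group_add \<Rightarrow> ('g \<Rightarrow> 'r) \<Rightarrow> 'm"
  assumes "graded_algebra alg Rg"
    and "rmod Rg act"
  shows "Rat act = sum_Mv act \<and>
    direct_Mv act \<and>
    (\<forall>\<sigma> \<rho> x r. x \<in> Mv act \<sigma> \<longrightarrow> r \<in> Rg \<rho> \<longrightarrow> act x (embR r) \<in> Mv act (\<sigma> + \<rho>)) \<and>
    (\<forall>(act1 :: 'a::ab_group_add \<Rightarrow> ('g \<Rightarrow> 'r) \<Rightarrow> 'a)
          (act2 :: 'b::ab_group_add \<Rightarrow> ('g \<Rightarrow> 'r) \<Rightarrow> 'b)
          (act3 :: 'c::ab_group_add \<Rightarrow> ('g \<Rightarrow> 'r) \<Rightarrow> 'c) f h.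
          rmod Rg act1 \<and> rmod Rg act2 \<and> rmod Rg act3 \<and>
          rmod_hom act1 act2 f \<and> rmod_hom act2 act3 h \<and>
          inj f \<and> range f = {y. h y = 0} \<and> surj h \<longrightarrow>
          f ` Rat act1 \<subseteq> Rat act2 \<and> h ` Rat act2 \<subseteq> Rat act3 \<and>
          inj_on f (Rat act1) \<and>
          f ` Rat act1 = Rat act2 \<inter> {y. h y = 0} \<and>
          h ` Rat act2 = Rat act3)"
proof -
  have gr: "graded_ring Rg" using assms(1) unfolding graded_algebra_def by blast
  show ?thesis
  proof (intro conjI)
    show "Rat act = sum_Mv act" by (rule Rat_eq_sum_Mv[OF gr assms(2)])
    show "direct_Mv act" by (rule direct_sum_Mv[OF gr assms(2)])
    show "\<forall>\<sigma> \<rho> x r. x \<in> Mv act \<sigma> \<longrightarrow> r \<in> Rg \<rho> \<longrightarrow> act x (embR r) \<in> Mv act (\<sigma> + \<rho>)"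
      using Mv_graded[OF gr assms(2)] by blast
  qed (intro allI impI, rule Rat_exact[OF gr]; blast)
qed

end
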